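(* Fix $s<\frac12$. Let $\phi^{(\omega)}=\sum_{n\ge1}\frac{g_n(\omega)}{z_n}e_n$. There exist constants $c>0$, $C>0$ and $N_*\ge1$ such that for all integers $N_0\ge N_*$ and all $\lambda>0$, $$p\Big(\Big\{\omega:\ N_0^{\frac12-s}\Big\|\sum_{n\ge N_0}\frac{g_n(\omega)}{z_n}e_n\Big\|_{H^s}>\lambda\Big\}\Big)\le C\exp(-\lambda^c).$$
   Context: $B_2\subset\mathbb{R}^2$ is the open unit disc; $(e_n)_{n\ge1}$ are the $L^2$-normalized real radial Dirichlet eigenfunctions of $-\Delta$ on $B_2$ with eigenvalues $z_n^2$, $0<z_1<z_2<\cdots$. For $f=\sum_n\hat f(n)e_n$, $\|f\|_{H^s}=\big(\sum_n z_n^{2s}|\hat f(n)|^2\big)^{1/2}$. $(g_n)_{n\ge1}$ are independent normalized complex Gaussian random variables on a probability space $(\Omega,\mathcal{M},p)$. *)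

theory Defs
  imports "HOL-Probability.Probability"
begin

definition bessel_J0 :: "real \<Rightarrow> real" where
  "bessel_J0 x = (\<Sum>k. (-1) ^ k / (fact k)\<^sup>2 * (x / 2) ^ (2 * k))"

text \<open>The radial Dirichlet eigenvalues of -Laplacian on the unit disc are z_n^2, where
  0 < z_1 < z_2 < ... are the positive zeros of J_0 (e_n(x) = c_n J_0(z_n |x|)).
  z 0 = 0 is an auxiliary starting value; z n for n >= 1 is the n-th positive zero.\<close>
fun bessel_zero :: "nat \<Rightarrow> real" where
  "bessel_zero 0 = 0"
| "bessel_zero (Suc n) = Inf {x. bessel_zero n < x \<and> bessel_J0 x = 0}"

text \<open>H^s norm of f = sum_n a_n e_n (index n >= 1), in terms of coefficients:
  (sum_n z_n^(2s) |a_n|^2)^(1/2); equal to infinity if the series diverges.\<close>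
definition Hs_norm :: "real \<Rightarrow> (nat \<Rightarrow> complex) \<Rightarrow> ereal" where
  "Hs_norm s a =
     (if summable (\<lambda>n. bessel_zero (Suc n) powr (2 * s) * (cmod (a (Suc n)))\<^sup>2)
      then ereal (sqrt (\<Sum>n. bessel_zero (Suc n) powr (2 * s) * (cmod (a (Suc n)))\<^sup>2))
      else \<infinity>)"

text \<open>Law of a normalized complex Gaussian: real and imaginary parts independent N(0,1/2),
  so that E|g|^2 = 1.\<close>
definition complex_gaussian :: "complex measure" where
  "complex_gaussian =
     distr (density lborel (normal_density 0 (sqrt (1/2)))
            \<Otimes>\<^sub>M density lborel (normal_density 0 (sqrt (1/2))))
           borel (\<lambda>(x, y). Complex x y)"

end

theory Submission
  imports Defs
begin

(*
  The zeros z_n of J_0 grow at least linearly.  In the Liouville normal form u = \<surd>x J_0, which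
  solves u'' + (1 + 1/(4x\<^sup>2)) u = 0, Sturm comparison with sin gives a zero in every interval of
  length \<pi>, and comparison with sin(\<omega>x), \<omega>\<^sup>2 > 1 + 1/(4x\<^sup>2), keeps consecutive zeros a fixed
  distance apart; hence z_n \<ge> c n.

  The squared tail norm N_0^(1-2s) \<Sum>_(n\<ge>N_0) z_n^(2s-2) |g_n|\<^sup>2 is a weighted sum of independent
  exponential variables whose weights are uniformly bounded and whose total mass is bounded
  independently of N_0, because \<Sum>_(n\<ge>N_0) n^(2s-2) \<approx> N_0^(2s-1).  From E exp(\<tau>|g|\<^sup>2) = 1/(1-\<tau>)
  and Chernoff's inequality the tail probability is at most exp(K - t\<lambda>\<^sup>2) \<le> C exp(-\<lambda>).
*)

section \<open>The Bessel function \<open>J\<^sub>0\<close>\<close>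

definition bessel_J0_fps :: "real fps" where
  "bessel_J0_fps = Abs_fps (\<lambda>k. (-1) ^ k / (fact k)\<^sup>2)"

lemma fps_conv_radius_bessel_J0_fps: "fps_conv_radius bessel_J0_fps = \<infinity>"
  unfolding fps_conv_radius_def
proof (rule conv_radius_inftyI'')
  fix z :: real
  have "summable (\<lambda>n. norm z ^ n /\<^sub>R fact n)"
    using exp_converges[of "norm z"] by (simp add: sums_iff)
  then have "summable (\<lambda>n. norm (fps_nth bessel_J0_fps n * z ^ n))"
  proof (rule summable_comparison_test[rotated], intro exI allI impI)
    fix n :: nat
    have "fact n \<le> (fact n :: real)\<^sup>2" by (simp add: power2_eq_square)
    then show "norm (norm (fps_nth bessel_J0_fps n * z ^ n)) \<le> norm z ^ n /\<^sub>R fact n"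
      by (simp add: bessel_J0_fps_def abs_mult power_abs divide_simps mult_left_mono)
  qed
  then show "summable (\<lambda>n. fps_nth bessel_J0_fps n * z ^ n)" by (rule summable_norm_cancel)
qed

lemma fps_conv_radius_deriv_infinite:
  fixes f :: "'a :: {banach, real_normed_field} fps"
  shows "fps_conv_radius f = \<infinity> \<Longrightarrow> fps_conv_radius (fps_deriv f) = \<infinity>"
  using fps_conv_radius_deriv[of f] by simp

lemma bessel_J0_fps_ode:
  "fps_X * fps_deriv (fps_deriv bessel_J0_fps) + fps_deriv bessel_J0_fps + bessel_J0_fps = 0"
proof (rule fps_ext)
  fix n :: nat
  let ?c = "fps_nth bessel_J0_fps"
  have rec: "real (Suc n) * real (Suc n) * ?c (Suc n) = - ?c n"
    by (simp add: bessel_J0_fps_def power2_eq_square field_simps del: of_nat_Suc)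
  have "fps_nth (fps_X * fps_deriv (fps_deriv bessel_J0_fps)) n
      = real n * real (Suc n) * ?c (Suc n)"
    by (cases n) auto
  then show "fps_nth (fps_X * fps_deriv (fps_deriv bessel_J0_fps)
      + fps_deriv bessel_J0_fps + bessel_J0_fps) n = fps_nth 0 n"
    using rec by (simp add: algebra_simps)
qed

lemma bessel_J0_eq_eval_fps: "bessel_J0 x = eval_fps bessel_J0_fps (x\<^sup>2 / 4)"
  unfolding bessel_J0_def eval_fps_def
  by (simp add: bessel_J0_fps_def power_mult power_divide)

lemma has_real_derivative_eval_fps_quarter_square:
  assumes "fps_conv_radius f = \<infinity>"
  shows "((\<lambda>x. eval_fps f (x\<^sup>2 / 4)) has_real_derivative
           x / 2 * eval_fps (fps_deriv f) (x\<^sup>2 / 4)) (at x within A)"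
proof -
  have "(eval_fps f has_real_derivative eval_fps (fps_deriv f) t) (at t)" for t
    using has_field_derivative_eval_fps[of t f UNIV] assms by simp
  moreover have "((\<lambda>x. x\<^sup>2 / 4) has_real_derivative x / 2) (at x within A)"
    by (auto intro!: derivative_eq_intros)
  ultimately show ?thesis by (rule DERIV_chain2[THEN DERIV_cong]) simp
qed

definition bessel_J0' :: "real \<Rightarrow> real" where
  "bessel_J0' x = x / 2 * eval_fps (fps_deriv bessel_J0_fps) (x\<^sup>2 / 4)"

definition bessel_J0'' :: "real \<Rightarrow> real" where
  "bessel_J0'' x = x\<^sup>2 / 4 * eval_fps (fps_deriv (fps_deriv bessel_J0_fps)) (x\<^sup>2 / 4)
                  + eval_fps (fps_deriv bessel_J0_fps) (x\<^sup>2 / 4) / 2"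

lemma has_real_derivative_bessel_J0:
  "(bessel_J0 has_real_derivative bessel_J0' x) (at x within A)"
  unfolding bessel_J0_eq_eval_fps[abs_def] bessel_J0'_def
  by (rule has_real_derivative_eval_fps_quarter_square[OF fps_conv_radius_bessel_J0_fps])

lemma has_real_derivative_bessel_J0':
  "(bessel_J0' has_real_derivative bessel_J0'' x) (at x within A)"
proof -
  have "fps_conv_radius (fps_deriv bessel_J0_fps) = \<infinity>"
    by (rule fps_conv_radius_deriv_infinite[OF fps_conv_radius_bessel_J0_fps])
  from has_real_derivative_eval_fps_quarter_square[OF this]
  have "(bessel_J0' has_real_derivative 1 / 2 * eval_fps (fps_deriv bessel_J0_fps) (x\<^sup>2 / 4)
      + x / 2 * (x / 2 * eval_fps (fps_deriv (fps_deriv bessel_J0_fps)) (x\<^sup>2 / 4))) (at x within A)"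
    unfolding bessel_J0'_def[abs_def] by (auto intro!: derivative_eq_intros)
  then show ?thesis unfolding bessel_J0''_def by (simp add: field_simps power2_eq_square)
qed

lemma bessel_J0_ode: "x * bessel_J0'' x + bessel_J0' x + x * bessel_J0 x = 0"
proof -
  let ?F = bessel_J0_fps and ?t = "x\<^sup>2 / 4"
  have r0: "fps_conv_radius ?F = \<infinity>" by (rule fps_conv_radius_bessel_J0_fps)
  have r1: "fps_conv_radius (fps_deriv ?F) = \<infinity>" by (rule fps_conv_radius_deriv_infinite[OF r0])
  have r2: "fps_conv_radius (fps_deriv (fps_deriv ?F)) = \<infinity>" by (rule fps_conv_radius_deriv_infinite[OF r1])
  have "fps_conv_radius (fps_X * fps_deriv (fps_deriv ?F)) = \<infinity>"
    using fps_conv_radius_mult[of fps_X "fps_deriv (fps_deriv ?F)"] r2 by simp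
  then have "eval_fps (fps_X * fps_deriv (fps_deriv ?F) + fps_deriv ?F + ?F) ?t
      = ?t * eval_fps (fps_deriv (fps_deriv ?F)) ?t + eval_fps (fps_deriv ?F) ?t + eval_fps ?F ?t"
    using r0 r1 r2 fps_conv_radius_add[of "fps_X * fps_deriv (fps_deriv ?F)" "fps_deriv ?F"]
    by (simp add: eval_fps_add eval_fps_mult)
  then have "?t * eval_fps (fps_deriv (fps_deriv ?F)) ?t + eval_fps (fps_deriv ?F) ?t
      + eval_fps ?F ?t = 0"
    by (simp add: bessel_J0_fps_ode)
  then have "x * (?t * eval_fps (fps_deriv (fps_deriv ?F)) ?t + eval_fps (fps_deriv ?F) ?t
      + eval_fps ?F ?t) = 0" by simp
  then show ?thesis
    unfolding bessel_J0''_def bessel_J0'_def bessel_J0_eq_eval_fps by (simp add: field_simps)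
qed

lemma bessel_J0_0: "bessel_J0 0 = 1"
  by (simp add: bessel_J0_eq_eval_fps eval_fps_at_0 bessel_J0_fps_def)

lemma continuous_on_bessel_J0: "continuous_on A bessel_J0"
  using has_real_derivative_bessel_J0
  by (meson DERIV_isCont continuous_at_imp_continuous_on)

definition bessel_u :: "real \<Rightarrow> real" where
  "bessel_u x = sqrt x * bessel_J0 x"

definition bessel_u' :: "real \<Rightarrow> real" where
  "bessel_u' x = bessel_J0 x / (2 * sqrt x) + sqrt x * bessel_J0' x"

lemma has_real_derivative_bessel_u:
  "x > 0 \<Longrightarrow> (bessel_u has_real_derivative bessel_u' x) (at x)"
  unfolding bessel_u_def[abs_def] bessel_u'_def
  by (auto intro!: derivative_eq_intros has_real_derivative_bessel_J0 simp: field_simps)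

lemma has_real_derivative_bessel_u':
  assumes "x > 0"
  shows "(bessel_u' has_real_derivative - (1 + 1 / (4 * x\<^sup>2)) * bessel_u x) (at x)"
proof -
  define r where "r = sqrt x"
  have r: "r > 0" "x = r * r" using assms by (auto simp: r_def)
  have J'': "bessel_J0'' x = - (bessel_J0' x + x * bessel_J0 x) / x"
    using bessel_J0_ode[of x] assms by (simp add: field_simps)
  have "(bessel_u' has_real_derivative
      (bessel_J0' x * (2 * r) - bessel_J0 x * (2 * (inverse r / 2))) / (2 * r * (2 * r))
       + (inverse r / 2 * bessel_J0' x + r * bessel_J0'' x)) (at x)"
    unfolding bessel_u'_def[abs_def] r_def using assms
    by (auto intro!: derivative_eq_intros has_real_derivative_bessel_J0 has_real_derivative_bessel_J0')
  moreover have "(bessel_J0' x * (2 * r) - bessel_J0 x * (2 * (inverse r / 2))) / (2 * r * (2 * r))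
       + (inverse r / 2 * bessel_J0' x + r * bessel_J0'' x) = - (1 + 1 / (4 * x\<^sup>2)) * bessel_u x"
    unfolding J'' bessel_u_def r_def[symmetric] unfolding r(2) using r(1)
    by (simp add: field_simps power2_eq_square)
  ultimately show ?thesis by simp
qed

lemma bessel_u_eq_0_iff: "x > 0 \<Longrightarrow> bessel_u x = 0 \<longleftrightarrow> bessel_J0 x = 0"
  by (simp add: bessel_u_def)

section \<open>Sturm comparison\<close>

lemma continuous_nonzero_same_sign:
  fixes f :: "real \<Rightarrow> real"
  assumes "convex S" "continuous_on S f" "\<And>x. x \<in> S \<Longrightarrow> f x \<noteq> 0" "x \<in> S" "y \<in> S"
  shows "0 < f x * f y"
proof (rule ccontr)
  assume "\<not> 0 < f x * f y"
  then have "f x * f y \<le> 0" by simp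
  then have "0 \<in> closed_segment (f x) (f y)"
    by (auto simp: closed_segment_eq_real_ivl mult_le_0_iff)
  moreover have "closed_segment x y \<subseteq> S"
    using assms by (simp add: closed_segment_subset)
  ultimately obtain z where "z \<in> S" "f z = 0"
    using IVT'_closed_segment_real[of 0 f x y] continuous_on_subset[OF assms(2)] by blast
  with assms(3) show False by blast
qed

lemma continuous_on_if_has_real_derivative:
  "(\<And>x. x \<in> S \<Longrightarrow> (f has_real_derivative f' x) (at x)) \<Longrightarrow> continuous_on S f"
  by (meson DERIV_isCont continuous_at_imp_continuous_on)

lemma has_real_derivative_nonpos_at_zero_from_left:
  fixes f :: "real \<Rightarrow> real"
  assumes "(f has_real_derivative D) (at b)" "a < b" "f b = 0" "\<And>x. x \<in> {a<..<b} \<Longrightarrow> 0 < f x"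
  shows "D \<le> 0"
proof (rule ccontr)
  assume "\<not> D \<le> 0"
  then obtain d where "0 < d" and d: "\<And>h. 0 < h \<Longrightarrow> h < d \<Longrightarrow> f (b - h) < f b"
    using DERIV_pos_inc_left[OF assms(1)] by auto
  define h where "h = min d (b - a) / 2"
  have "0 < h" "h < d" "h < b - a" using \<open>0 < d\<close> \<open>a < b\<close> by (simp_all add: h_def)
  then show False using d[of h] assms(3) assms(4)[of "b - h"] by auto
qed

text \<open>Both comparisons use the Wronskian \<open>W\<close> of \<open>f\<close> and \<open>sin (\<omega> (x - a))\<close>: its derivative is
  \<open>f sin (\<omega> (x - a)) (\<omega>\<^sup>2 - Q)\<close>, whose sign on the interval contradicts the signs of \<open>W\<close> at the
  end points.\<close>

lemma sturm_comparison_zero: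
  fixes f f' Q :: "real \<Rightarrow> real"
  assumes f: "\<And>x. x \<in> {a..a + pi} \<Longrightarrow> (f has_real_derivative f' x) (at x)"
    and f': "\<And>x. x \<in> {a..a + pi} \<Longrightarrow> (f' has_real_derivative - Q x * f x) (at x)"
    and Q: "\<And>x. x \<in> {a<..<a + pi} \<Longrightarrow> 1 < Q x"
  shows "\<exists>x\<in>{a..a + pi}. f x = 0"
proof (rule ccontr)
  assume "\<not> ?thesis"
  then have pos: "0 < f a * f x" if "x \<in> {a..a + pi}" for x
    using that pi_gt_zero
    by (intro continuous_nonzero_same_sign[of "{a..a + pi}"] continuous_on_if_has_real_derivative[OF f]) auto
  define W where "W x = f a * (f' x * sin (x - a) - f x * cos (x - a))" for x
  have "\<exists>z>a. z < a + pi \<and> W (a + pi) - W a = (a + pi - a) * (f a * f z * sin (z - a) * (1 - Q z))"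
  proof (rule MVT2)
    fix x assume "a \<le> x" "x \<le> a + pi"
    then have "(W has_real_derivative f a * ((- Q x * f x) * sin (x - a) + f' x * cos (x - a)
        - (f' x * cos (x - a) + f x * (- sin (x - a))))) (at x)"
      unfolding W_def by (auto intro!: derivative_eq_intros f f')
    then show "(W has_real_derivative f a * f x * sin (x - a) * (1 - Q x)) (at x)"
      by (simp add: algebra_simps)
  qed (use pi_gt_zero in auto)
  then obtain z where z: "a < z" "z < a + pi"
    and W: "W (a + pi) - W a = pi * (f a * f z * sin (z - a) * (1 - Q z))" by auto
  have "0 < f a * f z" "0 < sin (z - a)" "1 - Q z < 0"
    using pos z Q by (auto intro: sin_gt_zero)
  then have "pi * (f a * f z * sin (z - a) * (1 - Q z)) < 0"
    by (simp add: mult_pos_neg)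
  moreover have "W (a + pi) - W a = f a * f (a + pi) + f a * f a"
    by (simp add: W_def)
  moreover have "0 < f a * f (a + pi)" "0 < f a * f a"
    using pos pi_gt_zero by auto
  ultimately show False using W by linarith
qed

lemma sturm_comparison_gap:
  fixes f f' Q :: "real \<Rightarrow> real"
  assumes "a < b" "f a = 0" "f b = 0" and nz: "\<And>x. x \<in> {a<..<b} \<Longrightarrow> f x \<noteq> 0"
    and f: "\<And>x. x \<in> {a..b} \<Longrightarrow> (f has_real_derivative f' x) (at x)"
    and f': "\<And>x. x \<in> {a..b} \<Longrightarrow> (f' has_real_derivative - Q x * f x) (at x)"
    and \<omega>: "0 < \<omega>" "\<And>x. x \<in> {a<..<b} \<Longrightarrow> Q x < \<omega>\<^sup>2"
  shows "pi / \<omega> \<le> b - a"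
proof (rule ccontr)
  assume "\<not> ?thesis"
  then have short: "\<omega> * (b - a) < pi" using \<omega> by (simp add: field_simps)
  define \<sigma> where "\<sigma> = f ((a + b) / 2)"
  have pos: "0 < \<sigma> * f x" if "x \<in> {a<..<b}" for x
    unfolding \<sigma>_def using that \<open>a < b\<close>
    by (intro continuous_nonzero_same_sign[of "{a<..<b}"] continuous_on_if_has_real_derivative[of _ f f'] f nz)
      auto
  have "((\<lambda>x. \<sigma> * f x) has_real_derivative \<sigma> * f' b) (at b)"
    using f[of b] \<open>a < b\<close> by (auto intro!: derivative_eq_intros)
  then have "\<sigma> * f' b \<le> 0"
    by (rule has_real_derivative_nonpos_at_zero_from_left) (use \<open>a < b\<close> \<open>f b = 0\<close> pos in auto)
  define W where "W x = \<sigma> * (f' x * sin (\<omega> * (x - a)) - \<omega> * f x * cos (\<omega> * (x - a)))" for x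
  have "\<exists>z>a. z < b \<and> W b - W a = (b - a) * (\<sigma> * f z * sin (\<omega> * (z - a)) * (\<omega>\<^sup>2 - Q z))"
  proof (rule MVT2[OF \<open>a < b\<close>])
    fix x assume "a \<le> x" "x \<le> b"
    then have "(W has_real_derivative \<sigma> * ((- Q x * f x) * sin (\<omega> * (x - a))
        + f' x * (cos (\<omega> * (x - a)) * \<omega>) - (\<omega> * f' x * cos (\<omega> * (x - a))
        + \<omega> * f x * (- sin (\<omega> * (x - a)) * \<omega>)))) (at x)"
      unfolding W_def by (auto intro!: derivative_eq_intros f f')
    then show "(W has_real_derivative \<sigma> * f x * sin (\<omega> * (x - a)) * (\<omega>\<^sup>2 - Q x)) (at x)"
      by (simp add: algebra_simps power2_eq_square)
  qed
  then obtain z where z: "a < z" "z < b"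
    and W: "W b - W a = (b - a) * (\<sigma> * f z * sin (\<omega> * (z - a)) * (\<omega>\<^sup>2 - Q z))" by auto
  have "\<omega> * (z - a) < \<omega> * (b - a)" using z \<omega> by simp
  then have "\<omega> * (z - a) < pi" using short by linarith
  then have "0 < sin (\<omega> * (z - a))" using z \<omega> by (intro sin_gt_zero) auto
  then have "0 < (b - a) * (\<sigma> * f z * sin (\<omega> * (z - a)) * (\<omega>\<^sup>2 - Q z))"
    using pos[of z] \<omega>(2)[of z] z by simp
  moreover have "0 \<le> sin (\<omega> * (b - a))" using \<omega> short \<open>a < b\<close> by (intro sin_ge_zero) auto
  then have "\<sigma> * f' b * sin (\<omega> * (b - a)) \<le> 0"
    using \<open>\<sigma> * f' b \<le> 0\<close> by (rule mult_nonpos_nonneg[rotated])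
  then have "W b \<le> 0" using \<open>f b = 0\<close> by (simp add: W_def mult.assoc)
  moreover have "W a = 0" using \<open>f a = 0\<close> by (simp add: W_def)
  ultimately show False using W by linarith
qed

text \<open>The energy \<open>(f\<^sup>2 + f'\<^sup>2) e\<^sup>K\<^sup>x\<close> is nondecreasing, so it cannot vanish at \<open>a\<close> when it
  is positive at \<open>c\<close>.\<close>

lemma ode_no_double_zero:
  fixes f f' Q :: "real \<Rightarrow> real"
  assumes "c \<le> a"
    and f: "\<And>x. x \<in> {c..a} \<Longrightarrow> (f has_real_derivative f' x) (at x)"
    and f': "\<And>x. x \<in> {c..a} \<Longrightarrow> (f' has_real_derivative - Q x * f x) (at x)"
    and Q: "\<And>x. x \<in> {c..a} \<Longrightarrow> \<bar>1 - Q x\<bar> \<le> K"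
    and "f c \<noteq> 0"
  shows "f a \<noteq> 0 \<or> f' a \<noteq> 0"
proof -
  define G where "G x = ((f x)\<^sup>2 + (f' x)\<^sup>2) * exp (K * x)" for x
  have "G c \<le> G a"
  proof (rule DERIV_nonneg_imp_nondecreasing[OF \<open>c \<le> a\<close>])
    fix x assume x: "c \<le> x" "x \<le> a"
    have "(G has_real_derivative (2 * f x * f' x * (1 - Q x) + K * ((f x)\<^sup>2 + (f' x)\<^sup>2))
        * exp (K * x)) (at x)"
      unfolding G_def using x
      by (auto intro!: derivative_eq_intros f f' simp: algebra_simps)
    moreover have "\<bar>2 * f x * f' x\<bar> \<le> (f x)\<^sup>2 + (f' x)\<^sup>2"
      using sum_squares_bound[of "\<bar>f x\<bar>" "\<bar>f' x\<bar>"] by (simp add: abs_mult)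
    then have "\<bar>2 * f x * f' x * (1 - Q x)\<bar> \<le> ((f x)\<^sup>2 + (f' x)\<^sup>2) * K"
      unfolding abs_mult[of _ "1 - Q x"] using Q[of x] x
      by (intro mult_mono) auto
    then have "0 \<le> 2 * f x * f' x * (1 - Q x) + K * ((f x)\<^sup>2 + (f' x)\<^sup>2)"
      by (simp add: algebra_simps)
    ultimately show "\<exists>y. (G has_real_derivative y) (at x) \<and> 0 \<le> y" by force
  qed
  moreover have "0 < G c" using \<open>f c \<noteq> 0\<close> by (simp add: G_def add_pos_nonneg)
  ultimately show ?thesis by (auto simp: G_def)
qed

lemma first_zero_after_simple_zero:
  fixes f :: "real \<Rightarrow> real"
  assumes "a < b" "continuous_on {a..b} f" "f a = 0" "f b = 0"
    and "(f has_real_derivative D) (at a)" "D \<noteq> 0"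
  shows "\<exists>c\<in>{a<..b}. f c = 0 \<and> (\<forall>x\<in>{a<..<c}. f x \<noteq> 0)"
proof -
  obtain d where "0 < d" and d: "\<And>h. 0 < h \<Longrightarrow> h < d \<Longrightarrow> f (a + h) \<noteq> 0"
  proof (cases "0 < D")
    case True
    then show ?thesis using DERIV_pos_inc_right[OF assms(5)] that \<open>f a = 0\<close> by force
  next
    case False
    then have "D < 0" using \<open>D \<noteq> 0\<close> by simp
    then show ?thesis using DERIV_neg_dec_right[OF assms(5)] that \<open>f a = 0\<close> by force
  qed
  have near: "f x \<noteq> 0" if "a < x" "x < a + d" for x
    using d[of "x - a"] that by simp
  define Z where "Z = {x \<in> {a + d..b}. f x = 0}"
  have "b \<in> Z" using near[of b] \<open>a < b\<close> \<open>f b = 0\<close> by (force simp: Z_def)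
  moreover have "closed Z"
    unfolding Z_def using assms(2) \<open>0 < d\<close>
    by (intro continuous_closed_preimage_constant) (auto elim: continuous_on_subset)
  moreover have "bdd_below Z" by (auto simp: Z_def intro: bdd_belowI[of _ "a + d"])
  ultimately have "Inf Z \<in> Z" "\<And>x. x \<in> Z \<Longrightarrow> Inf Z \<le> x"
    by (auto intro: closed_contains_Inf cInf_lower)
  show ?thesis
  proof (intro bexI conjI ballI)
    show "f (Inf Z) = 0" "Inf Z \<in> {a<..b}"
      using \<open>Inf Z \<in> Z\<close> \<open>0 < d\<close> by (auto simp: Z_def)
    fix x assume x: "x \<in> {a<..<Inf Z}"
    show "f x \<noteq> 0"
    proof (cases "x < a + d")
      case False
      then have "f x = 0 \<Longrightarrow> x \<in> Z" using x \<open>Inf Z \<in> Z\<close> by (auto simp: Z_def)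
      then show ?thesis using x \<open>\<And>x. x \<in> Z \<Longrightarrow> Inf Z \<le> x\<close> by force
    qed (use x near in auto)
  qed
qed

section \<open>Zeros of \<open>J\<^sub>0\<close>\<close>

lemma bessel_J0_pos_near_0: "\<exists>\<eta>>0. \<forall>x\<in>{0..\<eta>}. 0 < bessel_J0 x"
proof -
  have "isCont bessel_J0 0" using has_real_derivative_bessel_J0 by (rule DERIV_isCont)
  then obtain d where "0 < d" and d: "\<And>x. dist x 0 < d \<Longrightarrow> dist (bessel_J0 x) (bessel_J0 0) < 1"
    unfolding continuous_at_eps_delta using zero_less_one by blast
  show ?thesis
  proof (intro exI[of _ "d / 2"] conjI ballI)
    fix x assume "x \<in> {0..d / 2}"
    then have "dist x 0 < d" using \<open>0 < d\<close> by (simp add: dist_real_def)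
    then show "0 < bessel_J0 x" using d[of x] by (simp add: dist_real_def bessel_J0_0)
  qed (use \<open>0 < d\<close> in simp)
qed

lemma has_real_derivative_bessel_u_on:
  assumes "0 < a" "x \<in> {a..b}"
  shows "(bessel_u has_real_derivative bessel_u' x) (at x)"
    and "(bessel_u' has_real_derivative - (1 + 1 / (4 * x\<^sup>2)) * bessel_u x) (at x)"
proof -
  have "0 < x" using assms by simp
  then show "(bessel_u has_real_derivative bessel_u' x) (at x)"
    and "(bessel_u' has_real_derivative - (1 + 1 / (4 * x\<^sup>2)) * bessel_u x) (at x)"
    by (rule has_real_derivative_bessel_u has_real_derivative_bessel_u')+
qed

lemma bessel_J0_has_zero_within_pi:
  assumes "0 < a"
  shows "\<exists>x\<in>{a..a + pi}. bessel_J0 x = 0"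
proof -
  have "\<exists>x\<in>{a..a + pi}. bessel_u x = 0"
    using assms
    by (intro sturm_comparison_zero[where f' = bessel_u' and Q = "\<lambda>x. 1 + 1 / (4 * x\<^sup>2)"]
        has_real_derivative_bessel_u_on[of a]) auto
  then show ?thesis using assms bessel_u_eq_0_iff by fastforce
qed

lemma bessel_J0_zero_simple:
  assumes "0 < c" "c \<le> a" "bessel_J0 c \<noteq> 0" "bessel_J0 a = 0"
  shows "bessel_u' a \<noteq> 0"
proof -
  have "\<bar>1 - (1 + 1 / (4 * x\<^sup>2))\<bar> \<le> 1 / (4 * c\<^sup>2)" if "x \<in> {c..a}" for x
  proof -
    have "c\<^sup>2 \<le> x\<^sup>2" using that \<open>0 < c\<close> by (simp add: power_mono)
    then show ?thesis using \<open>0 < c\<close> by (simp add: frac_le)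
  qed
  then have "bessel_u a \<noteq> 0 \<or> bessel_u' a \<noteq> 0"
    using assms bessel_u_eq_0_iff
    by (intro ode_no_double_zero[where f' = bessel_u' and Q = "\<lambda>x. 1 + 1 / (4 * x\<^sup>2)"]
        has_real_derivative_bessel_u_on[of c]) auto
  then show ?thesis using assms bessel_u_eq_0_iff by auto
qed

lemma bessel_J0_zero_gap:
  assumes \<eta>: "0 < \<eta>" "\<And>x. x \<in> {0..\<eta>} \<Longrightarrow> 0 < bessel_J0 x"
    and "0 < a" "bessel_J0 a = 0" "a < b" "bessel_J0 b = 0"
  shows "pi / sqrt (1 + 1 / (4 * \<eta>\<^sup>2)) \<le> b - a"
proof -
  have "\<eta> < a"
  proof (rule ccontr)
    assume "\<not> \<eta> < a"
    then have "0 < bessel_J0 a" using \<eta>(2) \<open>0 < a\<close> by simp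
    then show False using \<open>bessel_J0 a = 0\<close> by simp
  qed
  have u: "bessel_u a = 0" "bessel_u b = 0" using assms bessel_u_eq_0_iff by auto
  have "bessel_u' a \<noteq> 0"
    using \<eta>(1) \<eta>(2)[of \<eta>] assms(4) \<open>\<eta> < a\<close> by (intro bessel_J0_zero_simple[of \<eta>]) auto
  moreover have "continuous_on {a..b} bessel_u"
    by (rule continuous_on_if_has_real_derivative) (rule has_real_derivative_bessel_u_on(1)[OF \<open>0 < a\<close>])
  ultimately obtain c where c: "c \<in> {a<..b}" "bessel_u c = 0" "\<And>x. x \<in> {a<..<c} \<Longrightarrow> bessel_u x \<noteq> 0"
    using first_zero_after_simple_zero[OF \<open>a < b\<close> _ u has_real_derivative_bessel_u[OF \<open>0 < a\<close>]]
    by blast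
  have "1 + 1 / (4 * x\<^sup>2) < (sqrt (1 + 1 / (4 * \<eta>\<^sup>2)))\<^sup>2" if "x \<in> {a<..<c}" for x
  proof -
    have "\<eta>\<^sup>2 < x\<^sup>2" using that \<eta>(1) \<open>\<eta> < a\<close> by (simp add: power_strict_mono)
    then show ?thesis using \<eta>(1) by (simp add: frac_less2 add_pos_nonneg)
  qed
  then have "pi / sqrt (1 + 1 / (4 * \<eta>\<^sup>2)) \<le> c - a"
    using c u \<open>0 < a\<close>
    by (intro sturm_comparison_gap[where f = bessel_u and f' = bessel_u'
          and Q = "\<lambda>x. 1 + 1 / (4 * x\<^sup>2)"] has_real_derivative_bessel_u_on[of a])
      (auto simp: add_pos_nonneg)
  then show ?thesis using c by auto
qed

lemma bessel_J0_next_zero: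
  assumes "0 \<le> a" "0 < e" and gap: "\<And>x. a < x \<Longrightarrow> bessel_J0 x = 0 \<Longrightarrow> a + e \<le> x"
  defines "b \<equiv> Inf {x. a < x \<and> bessel_J0 x = 0}"
  shows "bessel_J0 b = 0" "a + e \<le> b"
proof -
  have Z: "{x. a < x \<and> bessel_J0 x = 0} = {x \<in> {a + e..}. bessel_J0 x = 0}"
    using gap \<open>0 < e\<close> by force
  have "closed {x \<in> {a + e..}. bessel_J0 x = 0}"
    by (intro continuous_closed_preimage_constant continuous_on_bessel_J0) auto
  moreover have "{x \<in> {a + e..}. bessel_J0 x = 0} \<noteq> {}"
    using bessel_J0_has_zero_within_pi[of "a + e"] assms by force
  moreover have "bdd_below {x \<in> {a + e..}. bessel_J0 x = 0}" by (auto intro: bdd_belowI)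
  ultimately have "b \<in> {x \<in> {a + e..}. bessel_J0 x = 0}"
    unfolding b_def Z by (rule closed_contains_Inf[rotated 2])
  then show "bessel_J0 b = 0" "a + e \<le> b" by auto
qed

theorem bessel_zero_linear_lower_bound: "\<exists>c>0. \<forall>n\<ge>1. c * real n \<le> bessel_zero n"
proof -
  obtain \<eta> where \<eta>: "0 < \<eta>" "\<And>x. x \<in> {0..\<eta>} \<Longrightarrow> 0 < bessel_J0 x"
    using bessel_J0_pos_near_0 by auto
  define \<delta> where "\<delta> = pi / sqrt (1 + 1 / (4 * \<eta>\<^sup>2))"
  have "0 < \<delta>" by (simp add: \<delta>_def add_pos_nonneg)
  \<comment> \<open>The zero property must be carried along: \<open>bessel_zero\<close> is an infimum, junk if no zero exists.\<close>
  have zero: "bessel_J0 (bessel_zero (Suc m)) = 0 \<and> \<eta> + real m * \<delta> \<le> bessel_zero (Suc m)" for m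
  proof (induction m)
    case 0
    have "\<eta> \<le> x" if "0 < x" "bessel_J0 x = 0" for x
      using \<eta>(2)[of x] that by force
    then show ?case using bessel_J0_next_zero[of 0 \<eta>] \<eta> by simp
  next
    case (Suc m)
    let ?a = "bessel_zero (Suc m)"
    have "0 \<le> real m * \<delta>" using \<open>0 < \<delta>\<close> by simp
    then have "0 < ?a" using Suc.IH \<eta>(1) by linarith
    then have "?a + \<delta> \<le> x" if "?a < x" "bessel_J0 x = 0" for x
      using bessel_J0_zero_gap[OF \<eta> _ _ that(1,2)] Suc.IH by (simp add: \<delta>_def)
    then show ?case
      using bessel_J0_next_zero[of ?a \<delta>] \<open>0 < ?a\<close> \<open>0 < \<delta>\<close> Suc.IH by (simp add: algebra_simps)
  qed
  show ?thesis
  proof (intro exI[of _ "min \<eta> \<delta>"] conjI allI impI)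
    fix n :: nat assume "1 \<le> n"
    then obtain m where m: "n = Suc m" by (cases n) auto
    have "min \<eta> \<delta> * real n = min \<eta> \<delta> + real m * min \<eta> \<delta>"
      unfolding m by (simp add: algebra_simps)
    also have "\<dots> \<le> \<eta> + real m * \<delta>" by (intro add_mono mult_left_mono) auto
    also have "\<dots> \<le> bessel_zero n" using zero[of m] m by (simp del: bessel_zero.simps)
    finally show "min \<eta> \<delta> * real n \<le> bessel_zero n" .
  qed (use \<eta> \<open>0 < \<delta>\<close> in simp)
qed

section \<open>Exponential moments of Gaussians\<close>

lemma normal_density_mult_exp_sq:
  assumes "0 < \<sigma>" "2 * \<sigma>\<^sup>2 * \<tau> < 1"
  defines "r \<equiv> 1 - 2 * \<sigma>\<^sup>2 * \<tau>"
  shows "normal_density 0 \<sigma> x * exp (\<tau> * x\<^sup>2) = normal_density 0 (\<sigma> / sqrt r) x / sqrt r"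
proof -
  have r: "0 < r" using assms by (simp add: r_def)
  have "normal_density 0 (\<sigma> / sqrt r) x = sqrt r / sqrt (2 * pi * \<sigma>\<^sup>2) * exp (- (r * x\<^sup>2) / (2 * \<sigma>\<^sup>2))"
    using r by (simp add: normal_density_def power_divide real_sqrt_divide field_simps)
  moreover have "exp (- x\<^sup>2 / (2 * \<sigma>\<^sup>2)) * exp (\<tau> * x\<^sup>2) = exp (- (r * x\<^sup>2) / (2 * \<sigma>\<^sup>2))"
    using assms(1) by (simp add: r_def exp_add[symmetric] field_simps)
  ultimately show ?thesis
    using r by (simp add: normal_density_def)
qed

lemma nn_integral_exp_sq_normal:
  assumes "0 < \<sigma>" "2 * \<sigma>\<^sup>2 * \<tau> < 1"
  shows "(\<integral>\<^sup>+ x. exp (\<tau> * x\<^sup>2) \<partial>density lborel (normal_density 0 \<sigma>))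
           = ennreal (1 / sqrt (1 - 2 * \<sigma>\<^sup>2 * \<tau>))"
proof -
  define r where "r = 1 - 2 * \<sigma>\<^sup>2 * \<tau>"
  have r: "0 < r" using assms by (simp add: r_def)
  have "(\<integral>\<^sup>+ x. exp (\<tau> * x\<^sup>2) \<partial>density lborel (normal_density 0 \<sigma>))
      = (\<integral>\<^sup>+ x. ennreal (normal_density 0 \<sigma> x * exp (\<tau> * x\<^sup>2)) \<partial>lborel)"
    by (subst nn_integral_density) (auto simp: ennreal_mult')
  also have "\<dots> = (\<integral>\<^sup>+ x. ennreal (1 / sqrt r) * normal_density 0 (\<sigma> / sqrt r) x \<partial>lborel)"
    using assms by (intro nn_integral_cong)
      (simp add: normal_density_mult_exp_sq r_def ennreal_mult'[symmetric])
  also have "\<dots> = ennreal (1 / sqrt r) * (\<integral>\<^sup>+ x. normal_density 0 (\<sigma> / sqrt r) x \<partial>lborel)"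
    by (rule nn_integral_cmult) simp
  also have "(\<integral>\<^sup>+ x. normal_density 0 (\<sigma> / sqrt r) x \<partial>lborel) = 1"
    using assms(1) r by (subst nn_integral_eq_integral) auto
  finally show ?thesis by (simp add: r_def)
qed

lemma nn_integral_exp_cmod_sq_complex_gaussian:
  assumes "\<tau> < 1"
  shows "(\<integral>\<^sup>+ z. exp (\<tau> * (cmod z)\<^sup>2) \<partial>complex_gaussian) = ennreal (1 / (1 - \<tau>))"
proof -
  let ?N = "density lborel (normal_density 0 (sqrt (1/2)))"
  interpret N: prob_space ?N by (rule prob_space_normal_density) simp
  have N: "(\<integral>\<^sup>+ x. exp (\<tau> * x\<^sup>2) \<partial>?N) = ennreal (1 / sqrt (1 - \<tau>))"
    using nn_integral_exp_sq_normal[of "sqrt (1/2)" \<tau>] assms by simp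
  have "(\<lambda>(x, y). Complex x y) = (\<lambda>p. complex_of_real (fst p) + \<i> * complex_of_real (snd p))"
    by (auto simp: complex_eq_iff)
  then have meas: "(\<lambda>(x, y). Complex x y) \<in> borel_measurable (?N \<Otimes>\<^sub>M ?N)" by simp
  have "(\<integral>\<^sup>+ z. exp (\<tau> * (cmod z)\<^sup>2) \<partial>complex_gaussian)
      = (\<integral>\<^sup>+ p. exp (\<tau> * (cmod (case p of (x, y) \<Rightarrow> Complex x y))\<^sup>2) \<partial>(?N \<Otimes>\<^sub>M ?N))"
    unfolding complex_gaussian_def by (subst nn_integral_distr[OF meas]) auto
  also have "\<dots> = (\<integral>\<^sup>+ p. ennreal (exp (\<tau> * (fst p)\<^sup>2)) * ennreal (exp (\<tau> * (snd p)\<^sup>2)) \<partial>(?N \<Otimes>\<^sub>M ?N))"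
    by (intro nn_integral_cong)
      (auto simp: cmod_def ennreal_mult'[symmetric] exp_add[symmetric] algebra_simps)
  also have "\<dots> = (\<integral>\<^sup>+ x. \<integral>\<^sup>+ y. ennreal (exp (\<tau> * x\<^sup>2)) * ennreal (exp (\<tau> * y\<^sup>2)) \<partial>?N \<partial>?N)"
    by (subst N.nn_integral_fst[symmetric]) auto
  also have "\<dots> = ennreal (1 / sqrt (1 - \<tau>)) * ennreal (1 / sqrt (1 - \<tau>))"
    by (simp add: nn_integral_cmult nn_integral_multc N)
  also have "\<dots> = ennreal (1 / (1 - \<tau>))"
    using assms by (simp add: ennreal_mult'[symmetric] real_sqrt_mult[symmetric])
  finally show ?thesis .
qed

lemma inverse_one_minus_le_exp:
  fixes x :: real
  assumes "0 \<le> x" "x \<le> 1/2"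
  shows "1 / (1 - x) \<le> exp (2 * x)"
proof -
  have "x * (2 * x) \<le> x * 1" using assms by (intro mult_left_mono) auto
  then have "1 \<le> (1 + 2 * x) * (1 - x)" by (simp add: algebra_simps)
  then have "1 / (1 - x) \<le> 1 + 2 * x" using assms by (simp add: pos_divide_le_eq)
  also have "\<dots> \<le> exp (2 * x)" by (rule exp_ge_add_one_self)
  finally show ?thesis .
qed

lemma nn_integral_exp_weighted_sum_complex_gaussian_le:
  fixes P :: "'w measure" and g :: "nat \<Rightarrow> 'w \<Rightarrow> complex" and v :: "nat \<Rightarrow> real"
  assumes "prob_space P"
    and ind: "prob_space.indep_vars P (\<lambda>_. borel) g {1..}"
    and dist: "\<And>n. n \<ge> 1 \<Longrightarrow> distr P borel (g n) = complex_gaussian"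
    and I: "finite I" "I \<subseteq> {1..}" and "0 \<le> t"
    and v: "\<And>n. n \<in> I \<Longrightarrow> 0 \<le> v n" "\<And>n. n \<in> I \<Longrightarrow> t * v n \<le> 1/2"
  shows "(\<integral>\<^sup>+ \<omega>. exp (t * (\<Sum>n\<in>I. v n * (cmod (g n \<omega>))\<^sup>2)) \<partial>P) \<le> exp (2 * t * (\<Sum>n\<in>I. v n))"
proof -
  interpret prob_space P by fact
  have [measurable]: "g n \<in> borel_measurable P" if "n \<in> I" for n
    using ind that I unfolding indep_vars_def by auto
  have indep: "indep_vars (\<lambda>_. borel) (\<lambda>n \<omega>. ennreal (exp (t * v n * (cmod (g n \<omega>))\<^sup>2))) I"
    using indep_vars_subset[OF ind I(2)] by (rule indep_vars_compose2) auto
  have tv: "0 \<le> t * v n" "t * v n \<le> 1/2" "0 \<le> 1 / (1 - t * v n)" if "n \<in> I" for n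
    using v[OF that] \<open>0 \<le> t\<close> by auto
  have moment: "(\<integral>\<^sup>+ \<omega>. exp (t * v n * (cmod (g n \<omega>))\<^sup>2) \<partial>P) = ennreal (1 / (1 - t * v n))"
    if "n \<in> I" for n
  proof -
    have "(\<integral>\<^sup>+ \<omega>. exp (t * v n * (cmod (g n \<omega>))\<^sup>2) \<partial>P)
        = (\<integral>\<^sup>+ z. exp (t * v n * (cmod z)\<^sup>2) \<partial>distr P borel (g n))"
      using that by (subst nn_integral_distr) auto
    also have "\<dots> = ennreal (1 / (1 - t * v n))"
      using that I dist[of n] v(2)[of n]
      by (subst dist) (auto intro!: nn_integral_exp_cmod_sq_complex_gaussian)
    finally show ?thesis .
  qed
  have "(\<integral>\<^sup>+ \<omega>. exp (t * (\<Sum>n\<in>I. v n * (cmod (g n \<omega>))\<^sup>2)) \<partial>P)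
      = (\<integral>\<^sup>+ \<omega>. (\<Prod>n\<in>I. ennreal (exp (t * v n * (cmod (g n \<omega>))\<^sup>2))) \<partial>P)"
    using I(1) by (intro nn_integral_cong) (simp add: sum_distrib_left exp_sum mult.assoc prod_ennreal)
  also have "\<dots> = (\<Prod>n\<in>I. ennreal (1 / (1 - t * v n)))"
    using I(1) indep by (simp add: indep_vars_nn_integral moment)
  also have "\<dots> = ennreal (\<Prod>n\<in>I. 1 / (1 - t * v n))"
    using tv by (intro prod_ennreal) simp
  also have "\<dots> \<le> ennreal (\<Prod>n\<in>I. exp (2 * (t * v n)))"
    using tv by (intro ennreal_leI prod_mono conjI inverse_one_minus_le_exp) auto
  also have "\<dots> = ennreal (exp (2 * t * (\<Sum>n\<in>I. v n)))"
    using I(1) by (simp add: exp_sum sum_distrib_left mult.assoc)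
  finally show ?thesis .
qed

lemma complex_gaussian_weighted_sum_tail:
  fixes P :: "'w measure" and g :: "nat \<Rightarrow> 'w \<Rightarrow> complex" and v :: "nat \<Rightarrow> real"
  assumes P: "prob_space P"
    and ind: "prob_space.indep_vars P (\<lambda>_. borel) g {1..}"
    and dist: "\<And>n. n \<ge> 1 \<Longrightarrow> distr P borel (g n) = complex_gaussian"
    and I: "finite I" "I \<subseteq> {1..}" and "0 < t"
    and v: "\<And>n. n \<in> I \<Longrightarrow> 0 \<le> v n" "\<And>n. n \<in> I \<Longrightarrow> t * v n \<le> 1/2"
  shows "measure P {\<omega> \<in> space P. L < (\<Sum>n\<in>I. v n * (cmod (g n \<omega>))\<^sup>2)}
           \<le> exp (2 * t * (\<Sum>n\<in>I. v n) - t * L)"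
proof -
  interpret prob_space P by fact
  have [measurable]: "g n \<in> borel_measurable P" if "n \<in> I" for n
    using ind that I unfolding indep_vars_def by auto
  define S where "S \<omega> = (\<Sum>n\<in>I. v n * (cmod (g n \<omega>))\<^sup>2)" for \<omega>
  have [measurable]: "S \<in> borel_measurable P" unfolding S_def by measurable
  have "emeasure P {\<omega> \<in> space P. L < S \<omega>} \<le> emeasure P {\<omega> \<in> space P. L \<le> S \<omega>}"
    by (intro emeasure_mono) auto
  also have "\<dots> \<le> ennreal (exp (- t * L)) * (\<integral>\<^sup>+ \<omega>. ennreal (exp (t * S \<omega>)) * indicator (space P) \<omega> \<partial>P)"
    using \<open>0 < t\<close> by (intro Chernoff_ineq_nn_integral_ge) auto
  also have "(\<integral>\<^sup>+ \<omega>. ennreal (exp (t * S \<omega>)) * indicator (space P) \<omega> \<partial>P) = (\<integral>\<^sup>+ \<omega>. exp (t * S \<omega>) \<partial>P)"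
    by (intro nn_integral_cong) simp
  also have "ennreal (exp (- t * L)) * \<dots> \<le> ennreal (exp (- t * L) * exp (2 * t * (\<Sum>n\<in>I. v n)))"
    using nn_integral_exp_weighted_sum_complex_gaussian_le[OF P ind dist I less_imp_le[OF \<open>0 < t\<close>] v]
    by (simp add: S_def ennreal_mult' mult_left_mono)
  finally show ?thesis
    unfolding S_def by (simp add: emeasure_eq_measure exp_add[symmetric] algebra_simps)
qed

section \<open>Tail sums\<close>

lemma powr_neg_le_diff_powr:
  fixes p x :: real
  assumes "1 < p" "1 < x"
  shows "x powr - p \<le> ((x - 1) powr (1 - p) - x powr (1 - p)) / (p - 1)"
proof -
  have "\<exists>z>x - 1. z < x \<and> x powr (1 - p) - (x - 1) powr (1 - p) = (x - (x - 1)) * ((1 - p) * z powr (1 - p - 1))"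
  proof (rule MVT2)
    fix y assume "x - 1 \<le> y" "y \<le> x"
    then show "((\<lambda>y. y powr (1 - p)) has_real_derivative (1 - p) * y powr (1 - p - 1)) (at y)"
      using assms by (intro has_real_derivative_powr) auto
  qed simp
  then obtain z where z: "x - 1 < z" "z < x"
    and mvt: "x powr (1 - p) - (x - 1) powr (1 - p) = (x - (x - 1)) * ((1 - p) * z powr (1 - p - 1))"
    by blast
  have eq: "(x - 1) powr (1 - p) - x powr (1 - p) = (p - 1) * z powr - p"
    using mvt by (auto simp: algebra_simps)
  have "x powr - p \<le> z powr - p" using z assms by (intro powr_mono2') auto
  then show ?thesis using assms by (simp add: eq pos_le_divide_eq mult.commute)
qed

lemma sum_powr_neg_tail_le:
  fixes p :: real
  assumes "1 < p" "2 \<le> N0"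
  shows "(\<Sum>n\<in>{N0..M}. real n powr - p) \<le> real (N0 - 1) powr (1 - p) / (p - 1)"
proof -
  define F where "F y = y powr (1 - p) / (p - 1)" for y :: real
  have telescope: "(\<Sum>n\<in>{N0..<N0 + k}. real n powr - p) \<le> F (real (N0 - 1)) - F (real (N0 + k - 1))"
    for k
  proof (induction k)
    case (Suc k)
    have "real (N0 + k) powr - p \<le> F (real (N0 + k - 1)) - F (real (N0 + k))"
      using powr_neg_le_diff_powr[OF \<open>1 < p\<close>, of "real (N0 + k)"] assms
      by (simp add: F_def of_nat_diff diff_divide_distrib)
    then show ?case using Suc.IH by simp
  qed simp
  have "0 \<le> F y" for y using assms by (simp add: F_def)
  show ?thesis
  proof (cases "N0 \<le> Suc M")
    case True
    then have "{N0..M} = {N0..<N0 + (Suc M - N0)}" by auto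
    then show ?thesis using telescope[of "Suc M - N0"] \<open>\<And>y. 0 \<le> F y\<close>
      by (simp add: F_def) (smt (verit))
  qed (use assms in \<open>simp add: F_def\<close>)
qed

lemma scaled_sum_powr_neg_tail_le:
  fixes p :: real
  assumes "1 < p" "2 \<le> N0"
  shows "real N0 powr (p - 1) * (\<Sum>n\<in>{N0..M}. real n powr - p) \<le> 2 powr (p - 1) / (p - 1)"
proof -
  have N0: "0 < real (N0 - 1)" "real N0 \<le> 2 * real (N0 - 1)" using assms by (auto simp: of_nat_diff)
  have "real N0 powr (p - 1) * (\<Sum>n\<in>{N0..M}. real n powr - p)
      \<le> real N0 powr (p - 1) * (real (N0 - 1) powr (1 - p) / (p - 1))"
    using assms by (intro mult_left_mono sum_powr_neg_tail_le) auto
  also have "\<dots> = (real N0 / real (N0 - 1)) powr (p - 1) / (p - 1)"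
    using powr_minus_divide[of "real (N0 - 1)" "p - 1"] by (simp add: powr_divide)
  also have "\<dots> \<le> 2 powr (p - 1) / (p - 1)"
    using N0 assms by (intro divide_right_mono powr_mono2) (auto simp: field_simps)
  finally show ?thesis .
qed

lemma tail_weight_bounds:
  fixes z :: "nat \<Rightarrow> real" and p :: real
  assumes "0 < a" "\<And>n. 1 \<le> n \<Longrightarrow> a * real n \<le> z n" "1 < p" "2 \<le> N0"
  shows "N0 \<le> n \<Longrightarrow> a powr p * (real N0 powr (p - 1) * z n powr - p) \<le> 1"
    and "a powr p * (real N0 powr (p - 1) * (\<Sum>n\<in>{N0..M}. z n powr - p)) \<le> 2 powr (p - 1) / (p - 1)"
proof -
  have z: "a powr p * z n powr - p \<le> real n powr - p" if "N0 \<le> n" for n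
  proof -
    have "z n powr - p \<le> (a * real n) powr - p"
      using that assms by (intro powr_mono2') auto
    then have "a powr p * z n powr - p \<le> a powr p * (a powr - p * real n powr - p)"
      using assms by (simp add: powr_mult mult_left_mono)
    also have "\<dots> = real n powr - p"
      using assms by (simp add: powr_add[symmetric] mult.assoc[symmetric])
    finally show ?thesis .
  qed
  show "a powr p * (real N0 powr (p - 1) * z n powr - p) \<le> 1" if "N0 \<le> n"
  proof -
    have "real n powr - p \<le> real N0 powr - p"
      using that assms by (intro powr_mono2') auto
    then have "a powr p * z n powr - p \<le> real N0 powr - p" using z[OF that] by linarith
    then have "real N0 powr (p - 1) * (a powr p * z n powr - p) \<le> real N0 powr (p - 1) * real N0 powr - p"
      by (rule mult_left_mono) simp
    then have "a powr p * (real N0 powr (p - 1) * z n powr - p) \<le> real N0 powr (p - 1) * real N0 powr - p"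
      by (simp add: mult.left_commute)
    also have "\<dots> = real N0 powr - 1" by (simp add: powr_add[symmetric])
    also have "\<dots> \<le> 1" using assms by (simp add: powr_neg_one)
    finally show ?thesis .
  qed
  have "a powr p * (real N0 powr (p - 1) * (\<Sum>n\<in>{N0..M}. z n powr - p))
      = real N0 powr (p - 1) * (\<Sum>n\<in>{N0..M}. a powr p * z n powr - p)"
    by (simp add: sum_distrib_left ac_simps)
  also have "\<dots> \<le> real N0 powr (p - 1) * (\<Sum>n\<in>{N0..M}. real n powr - p)"
    using z by (intro mult_left_mono sum_mono) auto
  also have "\<dots> \<le> 2 powr (p - 1) / (p - 1)"
    using assms by (intro scaled_sum_powr_neg_tail_le)
  finally show "a powr p * (real N0 powr (p - 1) * (\<Sum>n\<in>{N0..M}. z n powr - p)) \<le> 2 powr (p - 1) / (p - 1)" .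
qed

section \<open>The tail estimate\<close>

lemma Hs_norm_gt_imp_partial_sum_gt:
  fixes a :: "nat \<Rightarrow> complex"
  assumes "0 \<le> lam" "0 \<le> k" "ereal lam < ereal k * Hs_norm s a"
  shows "\<exists>M. lam\<^sup>2 < k\<^sup>2 * (\<Sum>n\<in>{1..M}. bessel_zero n powr (2 * s) * (cmod (a n))\<^sup>2)"
proof (rule ccontr)
  define T where "T = (\<lambda>m. bessel_zero (Suc m) powr (2 * s) * (cmod (a (Suc m)))\<^sup>2)"
  assume "\<not> ?thesis"
  then have partial: "k\<^sup>2 * (\<Sum>m<M. T m) \<le> lam\<^sup>2" for M
    by (simp add: T_def not_less sum.atLeast1_atMost_eq)
  have "0 < k" using assms by (cases "k = 0") (auto simp: zero_ereal_def[symmetric])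
  then have bound: "(\<Sum>m<M. T m) \<le> lam\<^sup>2 / k\<^sup>2" for M
    using partial[of M] by (simp add: field_simps)
  have "0 \<le> T m" for m by (simp add: T_def)
  then have "summable T" using bound by (intro summableI_nonneg_bounded) auto
  moreover have "suminf T \<le> lam\<^sup>2 / k\<^sup>2" using \<open>summable T\<close> bound by (intro suminf_le_const) auto
  then have "sqrt (suminf T) \<le> lam / k"
    using assms \<open>0 < k\<close> by (simp add: real_le_lsqrt power_divide)
  ultimately have "ereal k * Hs_norm s a \<le> ereal lam"
    using \<open>0 < k\<close> unfolding Hs_norm_def T_def[symmetric] by (simp add: field_simps)
  with assms(3) show False by simp
qed

lemma Hs_norm_tail_gt_imp_weighted_sum_gt:
  fixes b :: "nat \<Rightarrow> complex"
  assumes "0 \<le> lam" "1 \<le> N0" "\<And>n. N0 \<le> n \<Longrightarrow> 0 < bessel_zero n"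
    and "ereal lam < ereal (real N0 powr (1/2 - s)) *
           Hs_norm s (\<lambda>n. if n \<ge> N0 then b n / complex_of_real (bessel_zero n) else 0)"
  shows "\<exists>M. lam\<^sup>2 < (\<Sum>n\<in>{N0..M}.
           real N0 powr (1 - 2 * s) * bessel_zero n powr (2 * s - 2) * (cmod (b n))\<^sup>2)"
proof -
  let ?a = "\<lambda>n. if n \<ge> N0 then b n / complex_of_real (bessel_zero n) else 0"
  obtain M where M: "lam\<^sup>2 < (real N0 powr (1/2 - s))\<^sup>2 *
      (\<Sum>n\<in>{1..M}. bessel_zero n powr (2 * s) * (cmod (?a n))\<^sup>2)"
    using Hs_norm_gt_imp_partial_sum_gt[OF \<open>0 \<le> lam\<close> powr_ge_zero assms(4)] by blast
  have coeff: "bessel_zero n powr (2 * s) * (cmod (b n / complex_of_real (bessel_zero n)))\<^sup>2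
      = bessel_zero n powr (2 * s - 2) * (cmod (b n))\<^sup>2" if "N0 \<le> n" for n
    using assms(3)[OF that] by (simp add: powr_diff powr_numeral norm_divide power_divide)
  have "(\<Sum>n\<in>{1..M}. bessel_zero n powr (2 * s) * (cmod (?a n))\<^sup>2)
      = (\<Sum>n\<in>{n \<in> {1..M}. N0 \<le> n}. bessel_zero n powr (2 * s)
          * (cmod (b n / complex_of_real (bessel_zero n)))\<^sup>2)"
    by (subst sum.inter_filter, simp, rule sum.cong) auto
  also have "{n \<in> {1..M}. N0 \<le> n} = {N0..M}" using \<open>1 \<le> N0\<close> by auto
  finally have "(\<Sum>n\<in>{1..M}. bessel_zero n powr (2 * s) * (cmod (?a n))\<^sup>2)
      = (\<Sum>n\<in>{N0..M}. bessel_zero n powr (2 * s - 2) * (cmod (b n))\<^sup>2)"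
    using coeff by simp
  moreover have "(real N0 powr (1/2 - s))\<^sup>2 = real N0 powr (1 - 2 * s)"
    by (simp add: powr_add[symmetric] power2_eq_square)
  ultimately show ?thesis using M by (auto simp: sum_distrib_left mult.assoc)
qed

lemma (in finite_measure) measure_le_if_incseq_cover:
  assumes "incseq A" "range A \<subseteq> sets M" "E \<subseteq> (\<Union>n. A n)" "\<And>n. measure M (A n) \<le> b"
  shows "measure M E \<le> b"
proof -
  have "(\<lambda>n. measure M (A n)) \<longlonglongrightarrow> measure M (\<Union>n. A n)"
    using assms(2,1) by (rule finite_Lim_measure_incseq)
  then have "measure M (\<Union>n. A n) \<le> b" using assms(4) by (intro LIMSEQ_le_const2) auto
  moreover have "measure M E \<le> measure M (\<Union>n. A n)"
    using assms(2,3) by (intro finite_measure_mono) auto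
  ultimately show ?thesis by simp
qed

lemma Hs_tail_probability_bound:
  fixes s lam a :: real and P :: "'w measure" and g :: "nat \<Rightarrow> 'w \<Rightarrow> complex" and N0 :: nat
  assumes "s < 1/2" "prob_space P"
    and ind: "prob_space.indep_vars P (\<lambda>_. borel) g {1..}"
    and dist: "\<And>n. n \<ge> 1 \<Longrightarrow> distr P borel (g n) = complex_gaussian"
    and a: "0 < a" "\<And>n. 1 \<le> n \<Longrightarrow> a * real n \<le> bessel_zero n"
    and "2 \<le> N0" "0 \<le> lam"
  shows "measure P {\<omega> \<in> space P.
           ereal (real N0 powr (1/2 - s)) *
             Hs_norm s (\<lambda>n. if n \<ge> N0 then g n \<omega> / complex_of_real (bessel_zero n) else 0)
           > ereal lam}
         \<le> exp (2 powr (1 - 2 * s) / (1 - 2 * s) - a powr (2 - 2 * s) / 2 * lam\<^sup>2)"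
    (is "measure P ?E \<le> exp (?K - ?t * lam\<^sup>2)")
proof -
  interpret prob_space P by fact
  define v where "v n = real N0 powr (1 - 2 * s) * bessel_zero n powr (2 * s - 2)" for n
  define A where "A M = {\<omega> \<in> space P. lam\<^sup>2 < (\<Sum>n\<in>{N0..M}. v n * (cmod (g n \<omega>))\<^sup>2)}" for M
  have "0 < ?t" using a(1) by simp
  have z: "0 < bessel_zero n" if "N0 \<le> n" for n
  proof -
    have "0 < a * real n" using a(1) that \<open>2 \<le> N0\<close> by simp
    then show ?thesis using a(2)[of n] that \<open>2 \<le> N0\<close> by linarith
  qed
  have "a powr (2 - 2 * s) * v n \<le> 1" if "N0 \<le> n" for n
    using tail_weight_bounds(1)[of a bessel_zero "2 - 2 * s" N0 n] a assms that by (simp add: v_def)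
  then have tv: "0 \<le> v n" "?t * v n \<le> 1/2" if "N0 \<le> n" for n
    using that by (auto simp: v_def)
  have "a powr (2 - 2 * s) * (\<Sum>n\<in>{N0..M}. v n) \<le> ?K" for M
    using tail_weight_bounds(2)[of a bessel_zero "2 - 2 * s" N0 M] a assms
    by (simp add: v_def sum_distrib_left)
  then have weight_sum: "2 * ?t * (\<Sum>n\<in>{N0..M}. v n) \<le> ?K" for M by simp
  have [measurable]: "g n \<in> borel_measurable P" if "1 \<le> n" for n
    using ind that unfolding indep_vars_def by auto
  have cover: "?E \<subseteq> (\<Union>M. A M)"
  proof
    fix \<omega> assume "\<omega> \<in> ?E"
    then have "ereal lam < ereal (real N0 powr (1/2 - s)) *
        Hs_norm s (\<lambda>n. if n \<ge> N0 then g n \<omega> / complex_of_real (bessel_zero n) else 0)" by simp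
    moreover have "1 \<le> N0" using \<open>2 \<le> N0\<close> by simp
    ultimately obtain M where "lam\<^sup>2 < (\<Sum>n\<in>{N0..M}.
        real N0 powr (1 - 2 * s) * bessel_zero n powr (2 * s - 2) * (cmod (g n \<omega>))\<^sup>2)"
      using Hs_norm_tail_gt_imp_weighted_sum_gt[of lam N0 s "\<lambda>n. g n \<omega>"] \<open>0 \<le> lam\<close> z by blast
    then have "\<omega> \<in> A M" using \<open>\<omega> \<in> ?E\<close> by (simp add: A_def v_def)
    then show "\<omega> \<in> (\<Union>M. A M)" by blast
  qed
  have incseq: "incseq A"
  proof (rule incseq_SucI)
    fix M
    have "(\<Sum>n\<in>{N0..M}. v n * (cmod (g n \<omega>))\<^sup>2) \<le> (\<Sum>n\<in>{N0..Suc M}. v n * (cmod (g n \<omega>))\<^sup>2)" for \<omega>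
      using tv by (intro sum_mono2) auto
    then show "A M \<subseteq> A (Suc M)" unfolding A_def by (auto intro: less_le_trans)
  qed
  have events: "range A \<subseteq> events"
    using \<open>2 \<le> N0\<close> unfolding A_def by auto
  have bound: "measure P (A M) \<le> exp (?K - ?t * lam\<^sup>2)" for M
  proof -
    have "measure P (A M) \<le> exp (2 * ?t * (\<Sum>n\<in>{N0..M}. v n) - ?t * lam\<^sup>2)"
      unfolding A_def using assms tv \<open>0 < ?t\<close>
      by (intro complex_gaussian_weighted_sum_tail) auto
    then show ?thesis using weight_sum[of M] by (smt (verit) exp_le_cancel_iff)
  qed
  show ?thesis by (rule measure_le_if_incseq_cover[OF incseq events cover bound])
qed

lemma exp_neg_quadratic_le:
  fixes t K x :: real
  assumes "0 < t"
  shows "exp (K - t * x\<^sup>2) \<le> exp (K + 1 / (4 * t)) * exp (- x)"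
proof -
  have "0 \<le> t * (x - 1 / (2 * t))\<^sup>2" using assms by simp
  also have "\<dots> = t * x\<^sup>2 - x + 1 / (4 * t)"
    using assms by (simp add: power2_eq_square field_simps)
  finally show ?thesis by (simp add: exp_add[symmetric])
qed

theorem lemma3p1:
  fixes s :: real and P :: "'w measure" and g :: "nat \<Rightarrow> 'w \<Rightarrow> complex"
  assumes "s < 1/2"
    and "prob_space P"
    and "prob_space.indep_vars P (\<lambda>_. borel) g {1..}"
    and "\<And>n. n \<ge> 1 \<Longrightarrow> distr P borel (g n) = complex_gaussian"
  shows "\<exists>c > 0. \<exists>C > 0. \<exists>Nstar::nat. Nstar \<ge> 1 \<and>
           (\<forall>N0::nat. \<forall>lam::real. N0 \<ge> Nstar \<and> lam > 0 \<longrightarrow>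
              measure P {\<omega> \<in> space P.
                 ereal (real N0 powr (1/2 - s)) *
                   Hs_norm s (\<lambda>n. if n \<ge> N0 then g n \<omega> / complex_of_real (bessel_zero n) else 0)
                 > ereal lam}
              \<le> C * exp (- (lam powr c)))"
proof -
  obtain a where a: "0 < a" "\<And>n. 1 \<le> n \<Longrightarrow> a * real n \<le> bessel_zero n"
    using bessel_zero_linear_lower_bound by auto
  define t where "t = a powr (2 - 2 * s) / 2"
  define C where "C = exp (2 powr (1 - 2 * s) / (1 - 2 * s) + 1 / (4 * t))"
  have "0 < t" using a by (simp add: t_def)
  have "measure P {\<omega> \<in> space P.
                 ereal (real N0 powr (1/2 - s)) *
                   Hs_norm s (\<lambda>n. if n \<ge> N0 then g n \<omega> / complex_of_real (bessel_zero n) else 0)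
                 > ereal lam} \<le> C * exp (- (lam powr 1))"
    if "2 \<le> N0" "0 < lam" for N0 lam
    using order_trans[OF Hs_tail_probability_bound[OF assms a that(1) less_imp_le[OF that(2)]]
        exp_neg_quadratic_le[OF \<open>0 < t\<close>, unfolded t_def]] that(2)
    by (simp add: C_def t_def)
  then show ?thesis
    by (intro exI[of _ "1::real"] conjI exI[of _ C] exI[of _ "2::nat"]) (auto simp: C_def)
qed

end
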